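(* Let $m_1,m_2,m_3,m_4>0$, $M=m_1+m_2+m_3+m_4$. For $\mathbf{r}=(r_{12},r_{13},r_{14},r_{23},r_{24},r_{34})$ let $U(\mathbf{r})=\sum_{i<j}\frac{m_im_j}{r_{ij}}$, $I(\mathbf{r})=\frac{1}{2M}\sum_{i<j}m_im_jr_{ij}^2$, $P(\mathbf{r})=r_{12}r_{34}+r_{14}r_{23}-r_{13}r_{24}$, and $\mathcal{M}^+=\{\mathbf{r}\in[0,\infty)^6 : I(\mathbf{r})=1,\ P(\mathbf{r})=0\}$. If $\mathbf{r}^\ast\in\mathcal{M}^+$ is a critical point of the restriction $U|_{\mathcal{M}^+}$, then $\mathbf{r}^\ast$ is a nondegenerate local minimum point of $U|_{\mathcal{M}^+}$.
   Context: $U$ is $+\infty$ on the boundary of $\mathcal{M}^+$ (where some $r_{ij}=0$), so critical points lie in the part of $\mathcal{M}^+$ where all $r_{ij}>0$, which is a smooth 4-dimensional manifold. Equivalently, $\mathbf{r}^\ast$ is a critical point iff there exist Lagrange multipliers $\lambda,\sigma\in\mathbb{R}$ with $\nabla_{\mathbf{r}}\big(U+\lambda M(I-1)+\sigma P\big)(\mathbf{r}^\ast)=0$, i.e. $m_1m_2(r_{12}^{-3}-\lambda)=\sigma r_{34}/r_{12}$, $m_3m_4(r_{34}^{-3}-\lambda)=\sigma r_{12}/r_{34}$, $m_1m_3(r_{13}^{-3}-\lambda)=-\sigma r_{24}/r_{13}$, $m_2m_4(r_{24}^{-3}-\lambda)=-\sigma r_{13}/r_{24}$, $m_1m_4(r_{14}^{-3}-\lambda)=\sigma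 r_{23}/r_{14}$, $m_2m_3(r_{23}^{-3}-\lambda)=\sigma r_{14}/r_{23}$. *)

theory Defs
  imports "HOL-Analysis.Analysis"
begin

text \<open>Index set of the six mutual distances r12, r13, r14, r23, r24, r34.\<close>
datatype pr = P12 | P13 | P14 | P23 | P24 | P34

lemma UNIV_pr: "(UNIV :: pr set) = {P12, P13, P14, P23, P24, P34}"
  using pr.exhaust by auto

instance pr :: finite
  by standard (simp add: UNIV_pr)

fun fi :: "pr \<Rightarrow> nat" where
  "fi P12 = 1" | "fi P13 = 1" | "fi P14 = 1" | "fi P23 = 2" | "fi P24 = 2" | "fi P34 = 3"
fun fj :: "pr \<Rightarrow> nat" where
  "fj P12 = 2" | "fj P13 = 3" | "fj P14 = 4" | "fj P23 = 3" | "fj P24 = 4" | "fj P34 = 4"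

definition mm :: "(nat \<Rightarrow> real) \<Rightarrow> pr \<Rightarrow> real" where
  "mm m p = m (fi p) * m (fj p)"

definition Mtot :: "(nat \<Rightarrow> real) \<Rightarrow> real" where
  "Mtot m = m 1 + m 2 + m 3 + m 4"

definition Upot :: "(nat \<Rightarrow> real) \<Rightarrow> real ^ pr \<Rightarrow> real" where
  "Upot m r = (\<Sum>p\<in>UNIV. mm m p / r $ p)"

definition Imom :: "(nat \<Rightarrow> real) \<Rightarrow> real ^ pr \<Rightarrow> real" where
  "Imom m r = 1 / (2 * Mtot m) * (\<Sum>p\<in>UNIV. mm m p * (r $ p)^2)"

definition Pcay :: "real ^ pr \<Rightarrow> real" where
  "Pcay r = r$P12 * r$P34 + r$P14 * r$P23 - r$P13 * r$P24"

definition Mplus :: "(nat \<Rightarrow> real) \<Rightarrow> (real ^ pr) set" where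
  "Mplus m = {r. (\<forall>p. 0 \<le> r $ p) \<and> Imom m r = 1 \<and> Pcay r = 0}"

text \<open>Tangent space of M+ at a point with all r_ij > 0 (the constraints are regular there).\<close>
definition tangent :: "(nat \<Rightarrow> real) \<Rightarrow> real ^ pr \<Rightarrow> (real ^ pr) set" where
  "tangent m r = {v. frechet_derivative (Imom m) (at r) v = 0 \<and>
                     frechet_derivative Pcay (at r) v = 0}"

definition critical_point :: "(nat \<Rightarrow> real) \<Rightarrow> real ^ pr \<Rightarrow> bool" where
  "critical_point m r \<longleftrightarrow> r \<in> Mplus m \<and> (\<forall>p. 0 < r $ p) \<and>
     (\<forall>v\<in>tangent m r. frechet_derivative (Upot m) (at r) v = 0)"

definition Lagr :: "(nat \<Rightarrow> real) \<Rightarrow> real \<Rightarrow> real \<Rightarrow> real ^ pr \<Rightarrow> real" where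
  "Lagr m lam sig x = Upot m x + lam * Mtot m * (Imom m x - 1) + sig * Pcay x"

definition hess :: "(real ^ pr \<Rightarrow> real) \<Rightarrow> real ^ pr \<Rightarrow> real ^ pr \<Rightarrow> real ^ pr \<Rightarrow> real" where
  "hess f r v w = frechet_derivative (\<lambda>x. frechet_derivative f (at x) v) (at r) w"

text \<open>Nondegenerate local minimum of U restricted to M+: a local minimum of U on M+
  whose Hessian of the restriction (= Hessian of the Lagrangian, with the Lagrange
  multipliers of the critical point, restricted to the tangent space) is nondegenerate.\<close>
definition nondeg_local_min :: "(nat \<Rightarrow> real) \<Rightarrow> real ^ pr \<Rightarrow> bool" where
  "nondeg_local_min m r \<longleftrightarrow> r \<in> Mplus m \<and>
     (\<exists>e>0. \<forall>x\<in>Mplus m. dist x r < e \<longrightarrow> Upot m r \<le> Upot m x) \<and>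
     (\<exists>lam sig. frechet_derivative (Lagr m lam sig) (at r) = (\<lambda>v. 0) \<and>
        (\<forall>v\<in>tangent m r. (\<forall>w\<in>tangent m r. hess (Lagr m lam sig) r v w = 0) \<longrightarrow> v = 0))"

end

theory Submission
  imports Defs
begin

(* At a critical point r the Lagrange equations
     - m_i m_j / r_ij^2 + lam m_i m_j r_ij + sig dP/dr_ij = 0
   hold, and Euler's relation for the homogeneous functions U, I and P gives lam = U(r) / (2 M) > 0.
   As I and P are quadratic, the Lagrangian L = U + lam M (I - 1) + sig P has the exact expansion
     L(x) - L(r) = dL(r) (x - r) + Q_c(x - r) / 2,
     Q_c(y) = sum m_i m_j c_ij y_ij^2 + 2 sig P(y),   c_ij = 2 / (x_ij r_ij^2) + lam,
   and its Hessian at r is Q_c with c_ij = 2 / r_ij^3 + lam.  P only couples complementary pairs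
   (12|34, 13|24, 14|23), so Q_c splits into three binary forms, and the Lagrange equations of a
   complementary pair make the discriminant of its binary form negative as soon as
   c_ij r_ij >= 1 / r_ij^2 + lam r_ij.  This holds for the Hessian, and for the expansion whenever
   0 < x_ij < 2 r_ij.  Hence r is a local minimum, and the Hessian is positive definite on all of
   R^6, a fortiori nondegenerate on the tangent space. *)

lemma in_span_if_orthogonal_to_orthogonal_complement:
  fixes g :: "'a::euclidean_space" and S :: "'a set"
  assumes "\<And>v. (\<And>s. s \<in> S \<Longrightarrow> orthogonal s v) \<Longrightarrow> orthogonal g v"
  shows "g \<in> span S"
proof -
  obtain y z where y: "y \<in> span S" and z: "\<And>w. w \<in> span S \<Longrightarrow> orthogonal z w"
    and g: "g = y + z"
    using orthogonal_subspace_decomp_exists[of S g] by blast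
  have "orthogonal g z"
    using assms z span_base orthogonal_commute by blast
  moreover have "orthogonal y z"
    using z y orthogonal_commute by blast
  ultimately have "z \<bullet> z = 0"
    by (simp add: g orthogonal_def inner_add_left)
  with g y show ?thesis by simp
qed

lemma in_span_pairE:
  assumes "g \<in> span {a, b}"
  obtains \<alpha> \<beta> where "g = \<alpha> *\<^sub>R a + \<beta> *\<^sub>R b"
  using assms by (auto simp: span_breakdown_eq span_singleton) (metis add.commute diff_eq_eq)

lemma binary_form_pos:
  fixes a b c y1 y2 :: real
  assumes a: "0 < a" and disc: "b\<^sup>2 < a * c" and y: "y1 \<noteq> 0 \<or> y2 \<noteq> 0"
  shows "0 < a * y1\<^sup>2 + 2 * b * y1 * y2 + c * y2\<^sup>2"
proof -
  have "0 < (a * y1 + b * y2)\<^sup>2 + (a * c - b\<^sup>2) * y2\<^sup>2"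
  proof (cases "y2 = 0")
    case True
    with y a show ?thesis by simp
  next
    case False
    with disc have "0 < (a * c - b\<^sup>2) * y2\<^sup>2" by simp
    then show ?thesis by (simp add: add_nonneg_pos)
  qed
  also have "\<dots> = a * (a * y1\<^sup>2 + 2 * b * y1 * y2 + c * y2\<^sup>2)"
    by (simp add: algebra_simps power2_eq_square)
  finally show ?thesis
    using a zero_less_mult_pos by blast
qed

lemma binary_form_nonneg:
  fixes a b c y1 y2 :: real
  assumes "0 < a" and "b\<^sup>2 < a * c"
  shows "0 \<le> a * y1\<^sup>2 + 2 * b * y1 * y2 + c * y2\<^sup>2"
proof (cases "y1 = 0 \<and> y2 = 0")
  case False
  then show ?thesis
    using binary_form_pos[OF assms, of y1 y2] by linarith
qed simp

lemma multiplier_pair_discriminant: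
  fixes A B a1 a2 lam s c1 c2 :: real
  assumes pos: "0 < A" "0 < B" "0 < a1" "0 < a2" "0 < lam"
    and eq1: "s * a2 = A * (1 / a1\<^sup>2 - lam * a1)" and eq2: "s * a1 = B * (1 / a2\<^sup>2 - lam * a2)"
    and c1: "1 / a1\<^sup>2 + lam * a1 \<le> c1 * a1" and c2: "1 / a2\<^sup>2 + lam * a2 \<le> c2 * a2"
  shows "s\<^sup>2 < (A * c1) * (B * c2)"
proof -
  define u1 v1 u2 v2 where "u1 = 1 / a1\<^sup>2" "v1 = lam * a1" "u2 = 1 / a2\<^sup>2" "v2 = lam * a2"
  have uv: "0 < u1" "0 < v1" "0 < u2" "0 < v2"
    using pos by (simp_all add: u1_v1_u2_v2_def)
  have "s\<^sup>2 * (a1 * a2) = (s * a2) * (s * a1)"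
    by (simp add: power2_eq_square)
  also have "\<dots> = A * B * ((u1 - v1) * (u2 - v2))"
    unfolding eq1 eq2 u1_v1_u2_v2_def by simp
  also have "\<dots> < A * B * ((u1 + v1) * (u2 + v2))"
  proof -
    have "(u1 + v1) * (u2 + v2) - (u1 - v1) * (u2 - v2) = 2 * (u1 * v2 + v1 * u2)"
      by (simp add: algebra_simps)
    also have "\<dots> > 0" using uv by (simp add: add_pos_pos)
    finally show ?thesis using pos by simp
  qed
  also have "\<dots> \<le> A * B * ((c1 * a1) * (c2 * a2))"
  proof -
    have "(u1 + v1) * (u2 + v2) \<le> (c1 * a1) * (c2 * a2)"
      using c1 c2 uv unfolding u1_v1_u2_v2_def by (intro mult_mono; linarith)
    then show ?thesis using pos by simp
  qed
  finally have "s\<^sup>2 * (a1 * a2) < (A * c1) * (B * c2) * (a1 * a2)"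
    by (simp add: algebra_simps)
  then show ?thesis
    using pos by (simp add: mult_less_cancel_right)
qed

lemma has_derivative_vec_nth [derivative_intros]:
  "((\<lambda>x. x $ i) has_derivative (\<lambda>v. v $ i)) F"
  by (rule bounded_linear_imp_has_derivative[OF bounded_linear_vec_nth])

lemma open_positive_orthant: "open {y :: real ^ 'n. \<forall>i. 0 < y $ i}"
proof -
  have "{y :: real ^ 'n. \<forall>i. 0 < y $ i} = (\<Inter>i. {y. y $ i > 0})"
    by auto
  then show ?thesis
    by (simp add: open_INT open_halfspace_component_gt_cart)
qed

lemma sum_UNIV_pr: "(\<Sum>p\<in>UNIV. f p) = f P12 + f P13 + f P14 + f P23 + f P24 + f P34"
  by (simp add: UNIV_pr add.assoc)

lemma mm_pos:
  assumes "0 < m 1" "0 < m 2" "0 < m 3" "0 < m 4"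
  shows "0 < mm m p"
  using assms by (cases p) (simp_all add: mm_def)

fun complement_pair :: "pr \<Rightarrow> pr" where
  "complement_pair P12 = P34" | "complement_pair P34 = P12"
| "complement_pair P13 = P24" | "complement_pair P24 = P13"
| "complement_pair P14 = P23" | "complement_pair P23 = P14"

fun cayley_sign :: "pr \<Rightarrow> real" where
  "cayley_sign P13 = -1" | "cayley_sign P24 = -1" | "cayley_sign _ = 1"

definition cayley_grad :: "real ^ pr \<Rightarrow> real ^ pr" where
  "cayley_grad x = (\<chi> p. cayley_sign p * x $ complement_pair p)"

lemma inner_cayley_grad_self: "cayley_grad x \<bullet> x = 2 * Pcay x"
  by (simp add: cayley_grad_def inner_vec_def sum_UNIV_pr Pcay_def algebra_simps)

lemma Pcay_add: "Pcay (x + y) = Pcay x + cayley_grad x \<bullet> y + Pcay y"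
  by (simp add: cayley_grad_def inner_vec_def sum_UNIV_pr Pcay_def algebra_simps)

lemma Pcay_has_derivative: "(Pcay has_derivative (\<lambda>v. cayley_grad x \<bullet> v)) (at x)"
  unfolding Pcay_def
  by (rule has_derivative_eq_rhs, (rule derivative_intros)+)
    (simp add: fun_eq_iff cayley_grad_def inner_vec_def sum_UNIV_pr algebra_simps)

definition Upot_grad :: "(nat \<Rightarrow> real) \<Rightarrow> real ^ pr \<Rightarrow> real ^ pr" where
  "Upot_grad m x = (\<chi> p. - mm m p / (x $ p)\<^sup>2)"

definition Imom_grad :: "(nat \<Rightarrow> real) \<Rightarrow> real ^ pr \<Rightarrow> real ^ pr" where
  "Imom_grad m x = (\<chi> p. mm m p * x $ p / Mtot m)"

lemma Upot_has_derivative: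
  assumes "\<And>p. x $ p \<noteq> 0"
  shows "(Upot m has_derivative (\<lambda>v. Upot_grad m x \<bullet> v)) (at x)"
  unfolding Upot_def
  by (rule has_derivative_eq_rhs, (rule derivative_intros | simp add: assms)+)
    (simp add: fun_eq_iff Upot_grad_def inner_vec_def assms field_simps power2_eq_square)

lemma Imom_has_derivative: "(Imom m has_derivative (\<lambda>v. Imom_grad m x \<bullet> v)) (at x)"
  unfolding Imom_def
  by (rule has_derivative_eq_rhs, (rule derivative_intros)+)
    (simp add: fun_eq_iff Imom_grad_def inner_vec_def sum_distrib_left power2_eq_square
      field_simps)

lemma inner_Upot_grad_self:
  assumes "\<And>p. x $ p \<noteq> 0"
  shows "Upot_grad m x \<bullet> x = - Upot m x"
  by (simp add: Upot_grad_def Upot_def inner_vec_def assms power2_eq_square sum_negf)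

lemma inner_Imom_grad_self: "Imom_grad m x \<bullet> x = 2 * Imom m x"
proof -
  have "Imom_grad m x \<bullet> x = (\<Sum>p\<in>UNIV. mm m p * (x $ p)\<^sup>2) / Mtot m"
    by (simp add: Imom_grad_def inner_vec_def sum_divide_distrib power2_eq_square algebra_simps)
  then show ?thesis
    by (simp add: Imom_def)
qed

lemma Upot_increment:
  assumes "\<And>p. x $ p \<noteq> 0" and "\<And>p. r $ p \<noteq> 0"
  shows "Upot m x - Upot m r
    = Upot_grad m r \<bullet> (x - r) + (\<Sum>p\<in>UNIV. mm m p * (x $ p - r $ p)\<^sup>2 / (x $ p * (r $ p)\<^sup>2))"
proof -
  have "Upot m x - Upot m r = (\<Sum>p\<in>UNIV. mm m p / x $ p - mm m p / r $ p)"
    by (simp add: Upot_def sum_subtractf)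
  also have "\<dots> = (\<Sum>p\<in>UNIV. - mm m p / (r $ p)\<^sup>2 * (x $ p - r $ p)
      + mm m p * (x $ p - r $ p)\<^sup>2 / (x $ p * (r $ p)\<^sup>2))"
    using assms by (intro sum.cong) (simp_all add: field_simps power2_eq_square)
  also have "\<dots> = Upot_grad m r \<bullet> (x - r)
      + (\<Sum>p\<in>UNIV. mm m p * (x $ p - r $ p)\<^sup>2 / (x $ p * (r $ p)\<^sup>2))"
    unfolding sum.distrib by (simp add: Upot_grad_def inner_vec_def)
  finally show ?thesis .
qed

lemma Imom_increment:
  "Imom m x - Imom m r
    = Imom_grad m r \<bullet> (x - r) + (\<Sum>p\<in>UNIV. mm m p * (x $ p - r $ p)\<^sup>2) / (2 * Mtot m)"
proof -
  have "Imom m x - Imom m r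
      = (\<Sum>p\<in>UNIV. mm m p * (x $ p)\<^sup>2 - mm m p * (r $ p)\<^sup>2) / (2 * Mtot m)"
    by (simp add: Imom_def sum_subtractf diff_divide_distrib)
  also have "\<dots> = (\<Sum>p\<in>UNIV. 2 * (mm m p * r $ p * (x $ p - r $ p))
      + mm m p * (x $ p - r $ p)\<^sup>2) / (2 * Mtot m)"
    by (intro arg_cong[where f = "\<lambda>s. s / _"] sum.cong) (simp_all add: algebra_simps power2_eq_square)
  also have "\<dots> = Imom_grad m r \<bullet> (x - r) + (\<Sum>p\<in>UNIV. mm m p * (x $ p - r $ p)\<^sup>2) / (2 * Mtot m)"
    by (simp add: sum.distrib add_divide_distrib Imom_grad_def inner_vec_def sum_divide_distrib
        sum_distrib_left[symmetric])
  finally show ?thesis .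
qed

definition Lagr_grad :: "(nat \<Rightarrow> real) \<Rightarrow> real \<Rightarrow> real \<Rightarrow> real ^ pr \<Rightarrow> real ^ pr" where
  "Lagr_grad m lam sig x
    = Upot_grad m x + (lam * Mtot m) *\<^sub>R Imom_grad m x + sig *\<^sub>R cayley_grad x"

lemma Lagr_has_derivative:
  assumes "\<And>p. x $ p \<noteq> 0"
  shows "(Lagr m lam sig has_derivative (\<lambda>v. Lagr_grad m lam sig x \<bullet> v)) (at x)"
  unfolding Lagr_def[abs_def]
  by (rule has_derivative_eq_rhs,
      (rule derivative_intros Upot_has_derivative[OF assms] Imom_has_derivative
        Pcay_has_derivative)+)
    (simp add: fun_eq_iff Lagr_grad_def inner_add_left)

lemma Lagr_grad_nth:
  assumes "Mtot m \<noteq> 0"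
  shows "Lagr_grad m lam sig x $ p
    = - mm m p / (x $ p)\<^sup>2 + lam * mm m p * x $ p + sig * cayley_sign p * x $ complement_pair p"
  using assms by (simp add: Lagr_grad_def Upot_grad_def Imom_grad_def cayley_grad_def)

definition Lagr_qform :: "(nat \<Rightarrow> real) \<Rightarrow> real \<Rightarrow> (pr \<Rightarrow> real) \<Rightarrow> real ^ pr \<Rightarrow> real" where
  "Lagr_qform m sig c y = (\<Sum>p\<in>UNIV. mm m p * c p * (y $ p)\<^sup>2) + 2 * sig * Pcay y"

lemma Lagr_increment:
  assumes "Mtot m \<noteq> 0" and "\<And>p. x $ p \<noteq> 0" and "\<And>p. r $ p \<noteq> 0"
  shows "Lagr m lam sig x - Lagr m lam sig r
    = Lagr_grad m lam sig r \<bullet> (x - r)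
      + Lagr_qform m sig (\<lambda>p. 2 / (x $ p * (r $ p)\<^sup>2) + lam) (x - r) / 2"
proof -
  have P: "Pcay x - Pcay r = cayley_grad r \<bullet> (x - r) + Pcay (x - r)"
    using Pcay_add[of r "x - r"] by simp
  have "Lagr m lam sig x - Lagr m lam sig r
      = (Upot m x - Upot m r) + lam * Mtot m * (Imom m x - Imom m r) + sig * (Pcay x - Pcay r)"
    by (simp add: Lagr_def algebra_simps)
  also have "\<dots> = Lagr_grad m lam sig r \<bullet> (x - r)
      + ((\<Sum>p\<in>UNIV. mm m p * (x $ p - r $ p)\<^sup>2 / (x $ p * (r $ p)\<^sup>2))
        + lam / 2 * (\<Sum>p\<in>UNIV. mm m p * (x $ p - r $ p)\<^sup>2) + sig * Pcay (x - r))"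
    unfolding Upot_increment[OF assms(2,3)] Imom_increment P
    using assms(1) by (simp add: Lagr_grad_def inner_add_left algebra_simps)
  also have "(\<Sum>p\<in>UNIV. mm m p * (x $ p - r $ p)\<^sup>2 / (x $ p * (r $ p)\<^sup>2))
        + lam / 2 * (\<Sum>p\<in>UNIV. mm m p * (x $ p - r $ p)\<^sup>2) + sig * Pcay (x - r)
      = Lagr_qform m sig (\<lambda>p. 2 / (x $ p * (r $ p)\<^sup>2) + lam) (x - r) / 2"
    by (simp add: Lagr_qform_def sum_distrib_left sum_divide_distrib sum.distrib[symmetric]
        algebra_simps)
  finally show ?thesis .
qed

lemma hess_Lagr_diag:
  assumes M: "Mtot m \<noteq> 0" and r: "\<And>p. 0 < r $ p"
  shows "hess (Lagr m lam sig) r v v = Lagr_qform m sig (\<lambda>p. 2 / (r $ p) ^ 3 + lam) v"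
proof -
  have r0: "r $ p \<noteq> 0" for p
    using r[of p] by simp
  have grad_v: "Lagr_grad m lam sig y \<bullet> v
      = (\<Sum>p\<in>UNIV. (- mm m p / (y $ p)\<^sup>2 + lam * mm m p * y $ p) * v $ p)
        + sig * (cayley_grad v \<bullet> y)" for y
    using M
    by (simp add: inner_vec_def Lagr_grad_nth cayley_grad_def sum_UNIV_pr algebra_simps)
  define H where "H w = (\<Sum>p\<in>UNIV. (2 * mm m p / (r $ p) ^ 3 + lam * mm m p) * w $ p * v $ p)
      + sig * (cayley_grad v \<bullet> w)" for w
  have deriv: "((\<lambda>y. Lagr_grad m lam sig y \<bullet> v) has_derivative H) (at r)"
    unfolding grad_v
    by (rule has_derivative_eq_rhs, (rule derivative_intros | simp add: r0)+)
      (simp add: fun_eq_iff H_def r0 field_simps power2_eq_square power3_eq_cube)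
  have "frechet_derivative (\<lambda>y. Lagr_grad m lam sig y \<bullet> v) (at r)
      = frechet_derivative (\<lambda>y. frechet_derivative (Lagr m lam sig) (at y) v) (at r)"
  proof (rule frechet_derivative_transform_within_open)
    show "(\<lambda>y. Lagr_grad m lam sig y \<bullet> v) differentiable at r"
      using deriv by (rule differentiableI)
    show "open {y :: real ^ pr. \<forall>p. 0 < y $ p}"
      by (rule open_positive_orthant)
  next
    fix y :: "real ^ pr"
    assume "y \<in> {y. \<forall>p. 0 < y $ p}"
    then have "\<And>p. y $ p \<noteq> 0" by (simp add: less_imp_neq[symmetric])
    then show "Lagr_grad m lam sig y \<bullet> v = frechet_derivative (Lagr m lam sig) (at y) v"
      by (metis frechet_derivative_at Lagr_has_derivative)
  qed (use r in simp)
  then have "hess (Lagr m lam sig) r v v = H v"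
    unfolding hess_def using frechet_derivative_at[OF deriv] by simp
  also have "\<dots> = Lagr_qform m sig (\<lambda>p. 2 / (r $ p) ^ 3 + lam) v"
    by (simp add: H_def Lagr_qform_def inner_cayley_grad_self power2_eq_square algebra_simps)
  finally show ?thesis .
qed

lemma Lagr_qform_pos:
  assumes mm: "\<And>p. 0 < mm m p" and M: "Mtot m \<noteq> 0" and r: "\<And>p. 0 < r $ p"
    and lam: "0 < lam" and grad: "Lagr_grad m lam sig r = 0"
    and c: "\<And>p. 1 / (r $ p)\<^sup>2 + lam * r $ p \<le> c p * r $ p" and "y \<noteq> 0"
  shows "0 < Lagr_qform m sig c y"
proof -
  let ?q = complement_pair and ?s = "\<lambda>p. sig * cayley_sign p"
  have qq: "?q (?q p) = p" and sq: "cayley_sign (?q p) = cayley_sign p" for p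
    by (cases p; simp)+
  have eq: "?s p * r $ ?q p = mm m p * (1 / (r $ p)\<^sup>2 - lam * r $ p)" for p
    using arg_cong[OF grad, of "\<lambda>g. g $ p"] M by (simp add: Lagr_grad_nth algebra_simps)
  have cpos: "0 < mm m p * c p" for p
  proof -
    have "0 < 1 / (r $ p)\<^sup>2 + lam * r $ p"
      using r[of p] lam by (simp add: add_pos_pos)
    then have "0 < c p * r $ p"
      using c[of p] by linarith
    then show ?thesis
      using mm[of p] r[of p] by (simp add: zero_less_mult_iff)
  qed
  have disc: "(?s p)\<^sup>2 < (mm m p * c p) * (mm m (?q p) * c (?q p))" for p
    by (rule multiplier_pair_discriminant[OF mm mm r r lam eq _ c c])
      (use eq[of "?q p"] in \<open>simp add: qq sq\<close>)
  define block where "block p = mm m p * c p * (y $ p)\<^sup>2 + 2 * ?s p * y $ p * y $ ?q p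
      + mm m (?q p) * c (?q p) * (y $ ?q p)\<^sup>2" for p
  have block_nonneg: "0 \<le> block p" for p
    unfolding block_def by (rule binary_form_nonneg[OF cpos disc])
  have block_pos: "0 < block p" if "y $ p \<noteq> 0 \<or> y $ ?q p \<noteq> 0" for p
    unfolding block_def by (rule binary_form_pos[OF cpos disc that])
  obtain p where "y $ p \<noteq> 0"
    using \<open>y \<noteq> 0\<close> by (auto simp: vec_eq_iff)
  then have "0 < block P12 \<or> 0 < block P14 \<or> 0 < block P13"
    using block_pos by (cases p) auto
  moreover have "Lagr_qform m sig c y = block P12 + block P14 + block P13"
    by (simp add: Lagr_qform_def block_def sum_UNIV_pr Pcay_def algebra_simps)
  ultimately show ?thesis
    using block_nonneg[of P12] block_nonneg[of P14] block_nonneg[of P13] by linarith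
qed

lemma hess_Lagr_pos:
  assumes mm: "\<And>p. 0 < mm m p" and M: "Mtot m \<noteq> 0" and r: "\<And>p. 0 < r $ p"
    and lam: "0 < lam" and grad: "Lagr_grad m lam sig r = 0" and "v \<noteq> 0"
  shows "0 < hess (Lagr m lam sig) r v v"
proof -
  have "1 / (r $ p)\<^sup>2 + lam * r $ p \<le> (2 / (r $ p) ^ 3 + lam) * r $ p" for p
    using r[of p] by (simp add: field_simps power2_eq_square power3_eq_cube)
  then show ?thesis
    using Lagr_qform_pos[OF mm M r lam grad _ \<open>v \<noteq> 0\<close>] hess_Lagr_diag[OF M r] by simp
qed

lemma critical_point_multipliers:
  assumes crit: "critical_point m r" and M: "Mtot m \<noteq> 0"
  obtains lam sig where "Lagr_grad m lam sig r = 0"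
proof -
  have r0: "r $ p \<noteq> 0" for p
    using crit by (simp add: critical_point_def less_imp_neq[symmetric])
  have tangent_iff: "v \<in> tangent m r \<longleftrightarrow> orthogonal (Imom_grad m r) v \<and> orthogonal (cayley_grad r) v"
    for v
    by (simp add: tangent_def orthogonal_def frechet_derivative_at[OF Imom_has_derivative, symmetric]
        frechet_derivative_at[OF Pcay_has_derivative, symmetric])
  have "Upot_grad m r \<in> span {Imom_grad m r, cayley_grad r}"
  proof (rule in_span_if_orthogonal_to_orthogonal_complement)
    fix v
    assume "\<And>s. s \<in> {Imom_grad m r, cayley_grad r} \<Longrightarrow> orthogonal s v"
    then have "v \<in> tangent m r"
      by (simp add: tangent_iff)
    with crit show "orthogonal (Upot_grad m r) v"
      by (simp add: critical_point_def orthogonal_def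
          frechet_derivative_at[OF Upot_has_derivative[OF r0], symmetric])
  qed
  then obtain \<alpha> \<beta> where "Upot_grad m r = \<alpha> *\<^sub>R Imom_grad m r + \<beta> *\<^sub>R cayley_grad r"
    by (rule in_span_pairE)
  then have "Lagr_grad m (- \<alpha> / Mtot m) (- \<beta>) r = 0"
    using M by (simp add: Lagr_grad_def)
  then show thesis ..
qed

lemma Lagr_multiplier_pos:
  assumes mm: "\<And>p. 0 < mm m p" and M: "0 < Mtot m" and "r \<in> Mplus m" and r: "\<And>p. 0 < r $ p"
    and grad: "Lagr_grad m lam sig r = 0"
  shows "0 < lam"
proof -
  have r0: "r $ p \<noteq> 0" for p
    using r[of p] by simp
  have "0 = Lagr_grad m lam sig r \<bullet> r"
    by (simp add: grad)
  also have "\<dots> = 2 * lam * Mtot m - Upot m r"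
    using \<open>r \<in> Mplus m\<close>
    by (simp add: Lagr_grad_def inner_add_left inner_Upot_grad_self[OF r0] inner_Imom_grad_self
        inner_cayley_grad_self Mplus_def)
  finally have "Upot m r = 2 * lam * Mtot m"
    by simp
  moreover have "0 < Upot m r"
    unfolding Upot_def using mm r by (intro sum_pos) auto
  ultimately show ?thesis
    using M by (simp add: zero_less_mult_iff)
qed

lemma Upot_local_min:
  assumes mm: "\<And>p. 0 < mm m p" and M: "Mtot m \<noteq> 0" and rM: "r \<in> Mplus m"
    and r: "\<And>p. 0 < r $ p" and lam: "0 < lam" and grad: "Lagr_grad m lam sig r = 0"
  shows "\<exists>e>0. \<forall>x\<in>Mplus m. dist x r < e \<longrightarrow> Upot m r \<le> Upot m x"
proof -
  \<comment> \<open>The radius keeps every x_p in (0, 2 r_p): away from the boundary of Mplus, where Upot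
    only has junk values (x / 0 = 0), and small enough for the hypothesis of Lagr_qform_pos.\<close>
  define e where "e = Min (range (\<lambda>p. r $ p))"
  have "0 < e"
    unfolding e_def using r by (subst Min_gr_iff) auto
  moreover have "Upot m r \<le> Upot m x" if xM: "x \<in> Mplus m" and "dist x r < e" for x
  proof (cases "x = r")
    case False
    have near: "0 < x $ p \<and> x $ p < 2 * r $ p" for p
    proof -
      have "\<bar>x $ p - r $ p\<bar> \<le> norm (x - r)"
        using component_le_norm_cart[of "x - r" p] by simp
      moreover have "e \<le> r $ p"
        unfolding e_def by (rule Min_le) auto
      ultimately have "\<bar>x $ p - r $ p\<bar> < r $ p"
        using \<open>dist x r < e\<close> by (simp add: dist_norm)
      then show ?thesis
        unfolding abs_less_iff by linarith
    qed
    have c: "1 / (r $ p)\<^sup>2 + lam * r $ p \<le> (2 / (x $ p * (r $ p)\<^sup>2) + lam) * r $ p" for p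
      using near[of p] r[of p] by (simp add: field_simps power2_eq_square)
    have "0 < Lagr_qform m sig (\<lambda>p. 2 / (x $ p * (r $ p)\<^sup>2) + lam) (x - r)"
      using False by (intro Lagr_qform_pos[OF mm M r lam grad c]) simp
    also have "\<dots> = 2 * (Lagr m lam sig x - Lagr m lam sig r)"
      using Lagr_increment[OF M, of x r lam sig] near r grad
      by (simp add: less_imp_neq[symmetric])
    also have "Lagr m lam sig x - Lagr m lam sig r = Upot m x - Upot m r"
      using xM rM by (simp add: Lagr_def Mplus_def)
    finally show ?thesis
      by simp
  qed simp
  ultimately show ?thesis
    by blast
qed

theorem proposition3:
  fixes m :: "nat \<Rightarrow> real" and r :: "real ^ pr"
  assumes "m 1 > 0" and "m 2 > 0" and "m 3 > 0" and "m 4 > 0"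
    and "critical_point m r"
  shows "nondeg_local_min m r"
proof -
  have rM: "r \<in> Mplus m" and r: "\<And>p. 0 < r $ p"
    using \<open>critical_point m r\<close> by (simp_all add: critical_point_def)
  have mm: "\<And>p. 0 < mm m p"
    using assms(1-4) by (rule mm_pos)
  have M: "0 < Mtot m" and M0: "Mtot m \<noteq> 0"
    using assms(1-4) by (simp_all add: Mtot_def)
  obtain lam sig where grad: "Lagr_grad m lam sig r = 0"
    using critical_point_multipliers[OF \<open>critical_point m r\<close> M0] by blast
  have lam: "0 < lam"
    using Lagr_multiplier_pos[OF mm M rM r grad] .
  have "frechet_derivative (Lagr m lam sig) (at r) = (\<lambda>v. 0)"
    using frechet_derivative_at[OF Lagr_has_derivative, of r m lam sig] r grad
    by (simp add: less_imp_neq[symmetric])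
  moreover have "v = 0" if "v \<in> tangent m r" and "\<forall>w\<in>tangent m r. hess (Lagr m lam sig) r v w = 0"
    for v
    using that hess_Lagr_pos[OF mm M0 r lam grad, of v] by auto
  ultimately show ?thesis
    unfolding nondeg_local_min_def using rM Upot_local_min[OF mm M0 rM r lam grad] by blast
qed

end
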